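(* Let $q$ be a prime power, $\xi$ a generator of $\mathbb{F}_q^*$, and let $u=(\xi^a,\xi^b,\xi^c)$ and $v=(\xi^d,\xi^e,\xi^f)$ be elements of $\mathcal{D}_q$ (exponents in $\mathbb{Z}_{q-1}$). Let $M=\{\xi^{a-d},\xi^{b-e},\xi^{c-f}\}\subseteq\mathbb{F}_q^*$ (as a set, so repeated values are counted once). Then \[\rho_q(u,v)=\sum_{\mu\in M}|\widetilde{B}(u)\cap\widetilde{B}(\mu v)|.\]
   Context: $\mathbb{F}_q$ is the finite field with $q$ elements. Hamming distance $d(u,v)=|\{i:u_i\ne v_i\}|$ on $\mathbb{F}_q^3$; $B(u)=\{v:d(u,v)\le1\}$; $E(u)=\bigcup_{\lambda\in\mathbb{F}_q}B(\lambda u)$. $\mathcal{D}_q=\{(u_1,u_2,u_3)\in\mathbb{F}_q^3: u_1,u_2,u_3 \text{ pairwise distinct and nonzero}\}$, $\widetilde{B}(u)=B(u)\cap\mathcal{D}_q$, $\widetilde{E}(u)=E(u)\cap\mathcal{D}_q$. For $u,v\in\mathbb{F}_q^3$, $\rho_q(u,v)=0$ if $|\widetilde{E}(u)|=0$ or $|\widetilde{E}(v)|=0$, and otherwise $\rho_q(u,v)=\sum_{\mu\in\mathbb{F}_q^*}|\widetilde{B}(u)\cap\widetilde{B}(\mu v)|$. *)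

theory Defs
  imports Main
begin

definition comp3 :: "'a \<times> 'a \<times> 'a \<Rightarrow> nat \<Rightarrow> 'a" where
  "comp3 u i = (case u of (x, y, z) \<Rightarrow> (if i = 0 then x else if i = 1 then y else z))"

definition hamming :: "'a \<times> 'a \<times> 'a \<Rightarrow> 'a \<times> 'a \<times> 'a \<Rightarrow> nat" where
  "hamming u v = card {i::nat. i < 3 \<and> comp3 u i \<noteq> comp3 v i}"

definition ball1 :: "'a \<times> 'a \<times> 'a \<Rightarrow> ('a \<times> 'a \<times> 'a) set" where
  "ball1 u = {v. hamming u v \<le> 1}"

definition smul3 :: "'a::times \<Rightarrow> 'a \<times> 'a \<times> 'a \<Rightarrow> 'a \<times> 'a \<times> 'a" where
  "smul3 l u = (case u of (x, y, z) \<Rightarrow> (l * x, l * y, l * z))"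

definition Eset :: "'a::times \<times> 'a \<times> 'a \<Rightarrow> ('a \<times> 'a \<times> 'a) set" where
  "Eset u = (\<Union>l. ball1 (smul3 l u))"

definition Dq :: "('a::zero \<times> 'a \<times> 'a) set" where
  "Dq = {(x, y, z). x \<noteq> 0 \<and> y \<noteq> 0 \<and> z \<noteq> 0 \<and> x \<noteq> y \<and> y \<noteq> z \<and> x \<noteq> z}"

definition Btil :: "'a::zero \<times> 'a \<times> 'a \<Rightarrow> ('a \<times> 'a \<times> 'a) set" where
  "Btil u = ball1 u \<inter> Dq"

definition Etil :: "'a::{zero,times} \<times> 'a \<times> 'a \<Rightarrow> ('a \<times> 'a \<times> 'a) set" where
  "Etil u = Eset u \<inter> Dq"

definition rho :: "'a::{finite,field} \<times> 'a \<times> 'a \<Rightarrow> 'a \<times> 'a \<times> 'a \<Rightarrow> nat" where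
  "rho u v = (if card (Etil u) = 0 \<or> card (Etil v) = 0 then 0
     else (\<Sum>\<mu>\<in>{\<mu>::'a. \<mu> \<noteq> 0}. card (Btil u \<inter> Btil (smul3 \<mu> v))))"

end

theory Submission
  imports Defs
begin

text \<open>A vector within distance 1 of both u and \<mu> v agrees with each of them in at least two
  of its three coordinates, hence with both in some common coordinate i, which forces
  \<mu> = u_i / v_i. So only the three coordinate ratios contribute to the sum defining rho, and for
  u = (xi^a, xi^b, xi^c), v = (xi^d, xi^e, xi^f) these ratios are xi^(a-d), xi^(b-e), xi^(c-f).
  The degenerate case of rho does not occur, since every u in D_q lies in its own E(u).\<close>

lemma hamming_le_1_iff:
  "hamming (x1, y1, z1) (x2, y2, z2) \<le> 1 \<longleftrightarrow>
     (x1 = x2 \<and> y1 = y2) \<or> (x1 = x2 \<and> z1 = z2) \<or> (y1 = y2 \<and> z1 = z2)"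
proof -
  have "{i::nat. i < 3 \<and> comp3 (x1, y1, z1) i \<noteq> comp3 (x2, y2, z2) i}
      = (if x1 \<noteq> x2 then {0} else {}) \<union> (if y1 \<noteq> y2 then {1} else {})
          \<union> (if z1 \<noteq> z2 then {2} else {})"
    by (auto simp: comp3_def split: if_splits)
  then show ?thesis
    unfolding hamming_def by (auto split: if_splits)
qed

lemma mem_ball1_iff:
  "(x2, y2, z2) \<in> ball1 (x1, y1, z1) \<longleftrightarrow>
     (x1 = x2 \<and> y1 = y2) \<or> (x1 = x2 \<and> z1 = z2) \<or> (y1 = y2 \<and> z1 = z2)"
  using hamming_le_1_iff by (simp add: ball1_def)

lemma ball1_inter_smul3_nonempty:
  fixes u1 u2 u3 :: "'a::times"
  assumes "ball1 (u1, u2, u3) \<inter> ball1 (smul3 \<mu> (v1, v2, v3)) \<noteq> {}"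
  shows "u1 = \<mu> * v1 \<or> u2 = \<mu> * v2 \<or> u3 = \<mu> * v3"
proof -
  obtain w1 w2 w3 where
    "(w1, w2, w3) \<in> ball1 (u1, u2, u3)" "(w1, w2, w3) \<in> ball1 (\<mu> * v1, \<mu> * v2, \<mu> * v3)"
    using assms by (auto simp: smul3_def)
  then show ?thesis
    unfolding mem_ball1_iff by blast
qed

lemma Dq_mem_Etil:
  fixes u :: "'a::{monoid_mult, zero} \<times> 'a \<times> 'a"
  assumes "u \<in> Dq"
  shows "u \<in> Etil u"
proof -
  obtain u1 u2 u3 where "u = (u1, u2, u3)"
    by (cases u) auto
  then have "u \<in> ball1 (smul3 1 u)"
    by (simp add: smul3_def mem_ball1_iff)
  then show ?thesis
    using assms by (auto simp: Etil_def Eset_def)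
qed

lemma rho_Dq:
  fixes u v :: "'a::{finite, field} \<times> 'a \<times> 'a"
  assumes "u \<in> Dq" "v \<in> Dq"
  shows "rho u v = (\<Sum>\<mu>\<in>{\<mu>. \<mu> \<noteq> 0}. card (Btil u \<inter> Btil (smul3 \<mu> v)))"
proof -
  have "card (Etil u) \<noteq> 0" "card (Etil v) \<noteq> 0"
    using Dq_mem_Etil[OF assms(1)] Dq_mem_Etil[OF assms(2)] by (auto simp: card_eq_0_iff)
  then show ?thesis
    by (simp add: rho_def)
qed

theorem rho_eq_sum_coordinate_ratios:
  fixes u1 u2 u3 v1 v2 v3 :: "'a::{finite, field}"
  assumes "(u1, u2, u3) \<in> Dq" and "(v1, v2, v3) \<in> Dq"
  shows "rho (u1, u2, u3) (v1, v2, v3) =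
           (\<Sum>\<mu>\<in>{u1 / v1, u2 / v2, u3 / v3}. card (Btil (u1, u2, u3) \<inter> Btil (smul3 \<mu> (v1, v2, v3))))"
proof -
  let ?u = "(u1, u2, u3)" and ?v = "(v1, v2, v3)"
  let ?M = "{u1 / v1, u2 / v2, u3 / v3}"
  have nonzero: "u1 \<noteq> 0" "u2 \<noteq> 0" "u3 \<noteq> 0" "v1 \<noteq> 0" "v2 \<noteq> 0" "v3 \<noteq> 0"
    using assms by (auto simp: Dq_def)
  have "Btil ?u \<inter> Btil (smul3 \<mu> ?v) = {}" if "\<mu> \<notin> ?M" for \<mu>
  proof -
    have "u1 \<noteq> \<mu> * v1" "u2 \<noteq> \<mu> * v2" "u3 \<noteq> \<mu> * v3"
      using that nonzero by (auto simp: field_simps)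
    then show ?thesis
      using ball1_inter_smul3_nonempty[of u1 u2 u3 \<mu> v1 v2 v3] by (auto simp: Btil_def)
  qed
  moreover have "?M \<subseteq> {\<mu>. \<mu> \<noteq> 0}"
    using nonzero by auto
  ultimately have "(\<Sum>\<mu>\<in>{\<mu>. \<mu> \<noteq> 0}. card (Btil ?u \<inter> Btil (smul3 \<mu> ?v)))
                 = (\<Sum>\<mu>\<in>?M. card (Btil ?u \<inter> Btil (smul3 \<mu> ?v)))"
    by (intro sum.mono_neutral_right) auto
  then show ?thesis
    using rho_Dq[OF assms] by simp
qed

theorem lemma13:
  fixes \<xi> :: "'a::{finite,field}"
    and a b c d e f :: int
    and u v :: "'a \<times> 'a \<times> 'a"
  assumes gen: "\<forall>x::'a. x \<noteq> 0 \<longrightarrow> (\<exists>n::nat. x = \<xi> ^ n)"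
    and u_def: "u = (\<xi> powi a, \<xi> powi b, \<xi> powi c)"
    and v_def: "v = (\<xi> powi d, \<xi> powi e, \<xi> powi f)"
    and uD: "u \<in> Dq" and vD: "v \<in> Dq"
  shows "rho u v = (\<Sum>\<mu>\<in>{\<xi> powi (a - d), \<xi> powi (b - e), \<xi> powi (c - f)}.
                      card (Btil u \<inter> Btil (smul3 \<mu> v)))"
proof -
  have "\<xi> \<noteq> 0"
    using uD by (auto simp: u_def Dq_def power_int_0_left_if split: if_splits)
  then have "{\<xi> powi (a - d), \<xi> powi (b - e), \<xi> powi (c - f)}
           = {\<xi> powi a / \<xi> powi d, \<xi> powi b / \<xi> powi e, \<xi> powi c / \<xi> powi f}"
    by (simp add: power_int_diff)
  then show ?thesis
    using rho_eq_sum_coordinate_ratios uD vD unfolding u_def v_def by simp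
qed

end
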